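(* For all integers $n\ge3$ and $0\le m<n$, one has $L_e\le e_{n,m}\le U_e$, where \[ L_e=\frac{n-m+2}{n+m}e_{n-1,m-1}+\frac{n-m-2}{n-m}e_{n-1,m+1}+\frac{n-m-4}{n-m-2}\Bigl(\frac{2}{n-m}e_{n-2,m+2}+\frac{2}{n+m}e_{n-3,m+1}\Bigr), \] \[ U_e=\frac{n-m+2}{n+m}e_{n-1,m-1}+\frac{n-m-2}{n-m}e_{n-1,m+1}+\frac{2}{n-m}e_{n-2,m+2}+\frac{2}{n+m}e_{n-3,m+1}+\frac{4}{(n+m)(n+m-2)}e_{n-3,m-1}. \] Furthermore $U_e\le U_d\le d_{n,m}$, where $U_d$ is the expression $U_e$ with every $e$ replaced by $d$.
   Context: Define $c_{n,m}$ for integers $n,m\ge0$ by $c_{n,0}=1$ ($n\ge0$), $c_{n,m}=0$ ($n<m$), and $c_{n,m}=c_{n,m-1}+(m+1)c_{n-1,m}-(m-1)c_{n-2,m-1}$ for $n\ge m\ge1$ (the last term has coefficient $0$ when $m=1$); $c_{n,n}$ is the number of compacted binary trees of size $n$. Define $e_{n,m}=c_{(n+m)/2,(n-m)/2}/((n+m)/2)!$ for integers $n\ge m\ge0$ with $n-m$ even, and $e_{n,m}=0$ if $n-m$ is odd, if $m>n$, or if $m<0$. Define $d_{n,m}$ for $n\ge0$, $m\ge-1$ by $d_{0,0}=1$, $d_{0,m}=0$ ($m>0$), $d_{n,-1}=0$ ($n\ge0$), and $d_{n,m}=\frac{n-m+2}{n+m}d_{n-1,m-1}+d_{n-1,m+1}$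 for $n>0$, $m\ge0$ (equivalently, $d_{n,m}$ is the total weight of lattice paths from $(0,0)$ to $(n,m)$ with steps $(1,1),(1,-1)$ never below $y=0$, where an up step from $(a,b)$ has weight $(a-b+2)/(a+b+2)$). *)

theory Defs
  imports Complex_Main
begin

text \<open>c(n,m): c(n,0)=1, c(n,m)=0 for n<m, and for n \<ge> m \<ge> 1:
  c(n,m) = c(n,m-1) + (m+1) c(n-1,m) - (m-1) c(n-2,m-1).
  (For n = m = 1 the last term has coefficient 0, so truncated n-2 is harmless.)\<close>
function cc :: "nat \<Rightarrow> nat \<Rightarrow> int" where
  "cc n 0 = 1"
| "cc n (Suc k) = (if n < Suc k then 0
     else cc n k + int (k + 2) * cc (n - 1) (Suc k) - int k * cc (n - 2) k)"
  by pat_completeness auto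
termination by (relation "measure (\<lambda>(n, m). n + m)") auto

definition ee :: "int \<Rightarrow> int \<Rightarrow> real" where
  "ee n m = (if 0 \<le> m \<and> m \<le> n \<and> even (n - m)
     then of_int (cc (nat ((n + m) div 2)) (nat ((n - m) div 2))) / fact (nat ((n + m) div 2))
     else 0)"

text \<open>d(n,m): d(0,0)=1, d(0,m)=0 (m>0), d(n,-1)=0,
  d(n,m) = (n-m+2)/(n+m) d(n-1,m-1) + d(n-1,m+1) for n>0, m\<ge>0.
  (Values for m < -1 are never used; they are set to 0.)\<close>
fun dn :: "nat \<Rightarrow> int \<Rightarrow> real" where
  "dn 0 m = (if m = 0 then 1 else 0)"
| "dn (Suc n) m = (if m < 0 then 0
     else (of_int (int (Suc n) - m + 2) / of_int (int (Suc n) + m)) * dn n (m - 1) + dn n (m + 1))"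

definition dd :: "int \<Rightarrow> int \<Rightarrow> real" where
  "dd n m = dn (nat n) m"

end

theory Submission
  imports Defs
begin

text \<open>In the coordinates \<open>p = (n+m)/2\<close>, \<open>q = (n-m)/2\<close> the recurrence for \<open>c\<close> becomes
  \<open>e(n,m) = (n-m+2)/(n+m) e(n-1,m-1) + e(n-1,m+1) - \<delta>(n,m)\<close> with the nonnegative defect
  \<open>\<delta>(n,m) = 2(n-m-2)/((n+m)(n+m-2)) e(n-3,m-1)\<close>, while \<open>d\<close> satisfies the same recurrence
  without defect; hence \<open>e \<le> d\<close>. Unfolding either recurrence at \<open>(n,m)\<close>, \<open>(n-1,m+1)\<close> and
  \<open>(n-2,m)\<close> writes \<open>e(n,m)\<close> as \<open>U_e\<close> minus two defects and \<open>d(n,m)\<close> as \<open>U_d\<close> plus a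
  nonnegative term. For the lower bound the two defects are estimated by
  \<open>\<delta>(n,m) \<le> 2/(n-m) e(n-1,m+1)\<close>, which follows from applying twice the monotonicity
  \<open>(n-m+2)/(n+m) e(n-1,m-1) \<le> e(n,m)\<close>, i.e. \<open>(q+1) c(p-1,q) \<le> c(p,q)\<close>.\<close>

(* upper_combination ee, upper_combination dd and lower_combination ee are U_e, U_d and L_e;
   the coercions sit where they sit in lemma5p1, so unfolding reproduces its statement. *)

definition upper_combination :: "(int \<Rightarrow> int \<Rightarrow> real) \<Rightarrow> int \<Rightarrow> int \<Rightarrow> real" where
  "upper_combination f n m =
     real_of_int (n - m + 2) / real_of_int (n + m) * f (n - 1) (m - 1)
     + real_of_int (n - m - 2) / real_of_int (n - m) * f (n - 1) (m + 1)
     + 2 / real_of_int (n - m) * f (n - 2) (m + 2) + 2 / real_of_int (n + m) * f (n - 3) (m + 1)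
     + 4 / real_of_int ((n + m) * (n + m - 2)) * f (n - 3) (m - 1)"

definition lower_combination :: "(int \<Rightarrow> int \<Rightarrow> real) \<Rightarrow> int \<Rightarrow> int \<Rightarrow> real" where
  "lower_combination f n m =
     real_of_int (n - m + 2) / real_of_int (n + m) * f (n - 1) (m - 1)
     + real_of_int (n - m - 2) / real_of_int (n - m) * f (n - 1) (m + 1)
     + real_of_int (n - m - 4) / real_of_int (n - m - 2)
       * (2 / real_of_int (n - m) * f (n - 2) (m + 2) + 2 / real_of_int (n + m) * f (n - 3) (m + 1))"

definition defect :: "(int \<Rightarrow> int \<Rightarrow> real) \<Rightarrow> int \<Rightarrow> int \<Rightarrow> real" where
  "defect f n m =
     real_of_int (2 * (n - m - 2)) / real_of_int ((n + m) * (n + m - 2)) * f (n - 3) (m - 1)"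

lemma eq_upper_combination_from_recurrence:
  fixes f \<delta> :: "int \<Rightarrow> int \<Rightarrow> real" and n m :: int
  assumes rec: "\<And>N M :: int. 1 \<le> N \<Longrightarrow> 0 \<le> M \<Longrightarrow>
      f N M = (N - M + 2) / (N + M) * f (N - 1) (M - 1) + f (N - 1) (M + 1) - \<delta> N M"
    and "3 \<le> n" "0 \<le> m" "m < n"
  shows "f n m = upper_combination f n m + defect f n m
    - \<delta> n m - 2 / (n - m) * \<delta> (n - 1) (m + 1) - 2 / (n + m) * \<delta> (n - 2) m"
proof -
  define s t u where "s = real_of_int (n - m)" and "t = real_of_int (n + m)"
    and "u = real_of_int (n + m - 2)"
  have "s \<noteq> 0" "t \<noteq> 0" "u \<noteq> 0"
    using assms(2-4) unfolding s_def t_def u_def by auto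
  have "f n m = (s + 2) / t * f (n - 1) (m - 1) + f (n - 1) (m + 1) - \<delta> n m"
    using rec[of n m] assms(2-4) unfolding s_def t_def by simp
  moreover have "f (n - 1) (m + 1) = s / t * f (n - 2) m + f (n - 2) (m + 2) - \<delta> (n - 1) (m + 1)"
    using rec[of "n - 1" "m + 1"] assms(2-4) unfolding s_def t_def by (simp add: algebra_simps)
  moreover have "f (n - 2) m = s / u * f (n - 3) (m - 1) + f (n - 3) (m + 1) - \<delta> (n - 2) m"
    using rec[of "n - 2" m] assms(2-4) unfolding s_def u_def by (simp add: algebra_simps)
  moreover have "upper_combination f n m = (s + 2) / t * f (n - 1) (m - 1)
      + (s - 2) / s * f (n - 1) (m + 1) + 2 / s * f (n - 2) (m + 2) + 2 / t * f (n - 3) (m + 1)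
      + 4 / (t * u) * f (n - 3) (m - 1)"
    unfolding upper_combination_def s_def t_def u_def by simp
  moreover have "defect f n m = 2 * (s - 2) / (t * u) * f (n - 3) (m - 1)"
    unfolding defect_def s_def t_def u_def by simp
  ultimately show ?thesis
    unfolding s_def[symmetric] t_def[symmetric]
    using \<open>s \<noteq> 0\<close> \<open>t \<noteq> 0\<close> \<open>u \<noteq> 0\<close> by (simp (no_asm_simp) only:) (simp add: field_simps)
qed

lemma cc_eq_0: "p < q \<Longrightarrow> cc p q = 0"
  by (cases q) auto

lemma cc_nonneg_and_step: "0 \<le> cc p q \<and> (1 \<le> p \<longrightarrow> int (q + 1) * cc (p - 1) q \<le> cc p q)"
proof (induction q arbitrary: p)
  case 0
  show ?case by simp
next
  case (Suc k)
  have step: "int (Suc k + 1) * cc (p - 1) (Suc k) \<le> cc p (Suc k)" if "1 \<le> p" for p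
  proof (cases "p < Suc k")
    case True
    then show ?thesis by (simp add: cc_eq_0 del: cc.simps)
  next
    case False
    \<comment> \<open>By the recurrence the step at \<open>Suc k\<close> reduces to this bound, which is the step at \<open>k\<close>
      applied twice.\<close>
    have "int k * cc (p - 2) k \<le> cc p k"
    proof (cases k)
      case 0
      then show ?thesis by simp
    next
      case (Suc j)
      with False have "2 \<le> p" by simp
      have "int k * cc (p - 2) k \<le> int (k + 1) * cc (p - 2) k"
        using Suc.IH[of "p - 2"] by (simp add: mult_right_mono)
      also have "\<dots> \<le> cc (p - 1) k"
        using Suc.IH[of "p - 1"] \<open>2 \<le> p\<close> by (simp add: numeral_2_eq_2)
      also have "\<dots> \<le> int (k + 1) * cc (p - 1) k"
        using Suc.IH[of "p - 1"] by (simp add: mult_right_mono distrib_right)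
      also have "\<dots> \<le> cc p k"
        using Suc.IH[of p] \<open>2 \<le> p\<close> by simp
      finally show ?thesis .
    qed
    then show ?thesis using False by simp
  qed
  have "0 \<le> cc p (Suc k)" for p
  proof (induction p)
    case (Suc p)
    have "0 \<le> int (Suc k + 1) * cc p (Suc k)" using Suc by simp
    also have "\<dots> \<le> cc (Suc p) (Suc k)" using step[of "Suc p"] by simp
    finally show ?case .
  qed simp
  with step show ?case by blast
qed

lemma cc_nonneg: "0 \<le> cc p q"
  using cc_nonneg_and_step by blast

lemma cc_step: "1 \<le> p \<Longrightarrow> int (q + 1) * cc (p - 1) q \<le> cc p q"
  using cc_nonneg_and_step by blast

lemma ee_eq_cc: "N = int p + int q \<Longrightarrow> M = int p - int q \<Longrightarrow> ee N M = cc p q / fact p"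
  by (cases "q \<le> p") (auto simp: ee_def cc_eq_0)

lemma ee_eq_0: "M < 0 \<or> N < M \<or> odd (N - M) \<Longrightarrow> ee N M = 0"
  by (auto simp: ee_def)

lemma ee_nonneg: "0 \<le> ee N M"
  by (simp add: ee_def cc_nonneg)

lemma obtain_sum_diff_coordinates:
  fixes N M :: int
  assumes "0 \<le> M" "M \<le> N" "even (N - M)"
  obtains p q where "N = int p + int q" "M = int p - int q" "q \<le> p"
proof -
  obtain j where "N - M = 2 * j" using assms(3) by (elim evenE)
  with assms(1,2) show ?thesis using that[of "nat (M + j)" "nat j"] by auto
qed

lemma ee_step:
  fixes N M :: int
  assumes "0 \<le> N"
  shows "(N - M + 2) / (N + M) * ee (N - 1) (M - 1) \<le> ee N M"
proof (cases "0 \<le> M - 1 \<and> M - 1 \<le> N - 1 \<and> even ((N - 1) - (M - 1))")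
  case False
  then have "ee (N - 1) (M - 1) = 0" by (intro ee_eq_0) auto
  then show ?thesis by (simp add: ee_nonneg)
next
  case True
  then obtain p q where pq: "N - 1 = int p + int q" "M - 1 = int p - int q"
    using obtain_sum_diff_coordinates[of "M - 1" "N - 1"] by blast
  have coefficient: "(N - M + 2) / (N + M) = (real q + 1) / (real p + 1)"
  proof -
    have "N - M + 2 = 2 * (int q + 1)" "N + M = 2 * (int p + 1)" using pq by simp_all
    then show ?thesis by (simp add: field_simps)
  qed
  have step: "real (q + 1) * cc p q \<le> cc (Suc p) q"
    using of_int_le_iff[where 'a=real, THEN iffD2, OF cc_step[of "Suc p" q]] by simp
  have "(N - M + 2) / (N + M) * ee (N - 1) (M - 1) = real (q + 1) * cc p q / fact (Suc p)"
    unfolding coefficient ee_eq_cc[OF pq] by (simp add: field_simps)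
  also have "\<dots> \<le> cc (Suc p) q / fact (Suc p)"
    using step by (rule divide_right_mono) simp
  also have "\<dots> = ee N M"
    using pq by (intro ee_eq_cc[symmetric]) auto
  finally show ?thesis .
qed

lemma cc_div_fact_recurrence:
  assumes "k \<le> r"
  shows "cc (Suc r) (Suc k) / fact (Suc r) = (real k + 2) / (real r + 1) * (cc r (Suc k) / fact r)
    + cc (Suc r) k / fact (Suc r) - real k / ((real r + 1) * real r) * (cc (r - 1) k / fact (r - 1))"
proof -
  have "real_of_int (cc (Suc r) (Suc k))
      = cc (Suc r) k + (real k + 2) * cc r (Suc k) - real k * cc (r - 1) k"
    using assms by simp
  then have "cc (Suc r) (Suc k) / fact (Suc r) = (real k + 2) * cc r (Suc k) / fact (Suc r)
      + cc (Suc r) k / fact (Suc r) - real k * cc (r - 1) k / fact (Suc r)"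
    by (simp add: add_divide_distrib diff_divide_distrib)
  also have "(real k + 2) * cc r (Suc k) / fact (Suc r)
      = (real k + 2) / (real r + 1) * (cc r (Suc k) / fact r)"
    by (simp add: field_simps del: cc.simps)
  also have "real k * cc (r - 1) k / fact (Suc r)
      = real k / ((real r + 1) * real r) * (cc (r - 1) k / fact (r - 1))"
  proof (cases r)
    case 0
    with assms show ?thesis by simp
  next
    case (Suc r')
    then have "fact (Suc r) = (r + 1) * r * (fact (r - 1) :: real)"
      by (simp add: algebra_simps)
    then show ?thesis by (simp add: algebra_simps del: cc.simps fact_Suc)
  qed
  finally show ?thesis .
qed

lemma ee_recurrence:
  fixes N M :: int
  assumes "1 \<le> N" "0 \<le> M"
  shows "ee N M = (N - M + 2) / (N + M) * ee (N - 1) (M - 1) + ee (N - 1) (M + 1) - defect ee N M"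
proof -
  consider "N < M \<or> odd (N - M)" | "M = N" | "M < N" "even (N - M)"
    by linarith
  then show ?thesis
  proof cases
    case 1
    then have "ee N M = 0" "ee (N - 1) (M - 1) = 0" "ee (N - 1) (M + 1) = 0" "ee (N - 3) (M - 1) = 0"
      by (intro ee_eq_0, presburger)+
    then show ?thesis by (simp add: defect_def)
  next
    case 2
    define p where "p = nat (N - 1)"
    then have p: "N = int (Suc p)" using assms(1) by simp
    have "ee (N - 1) (M + 1) = 0" "defect ee N M = 0"
      using 2 by (auto simp: ee_eq_0 defect_def)
    moreover have "ee N M = cc (Suc p) 0 / fact (Suc p)" "ee (N - 1) (M - 1) = cc p 0 / fact p"
      using 2 p by (intro ee_eq_cc; simp)+
    moreover have "(N - M + 2) / (N + M) = 1 / (real p + 1)"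
      using 2 p by (simp add: field_simps)
    ultimately show ?thesis by simp
  next
    case 3
    have "M \<le> N" using 3 by simp
    with assms(2) obtain p q where pq: "N = int p + int q" "M = int p - int q" "q \<le> p"
      using 3(2) by (rule obtain_sum_diff_coordinates)
    from 3 pq obtain k where "q = Suc k" by (cases q) auto
    with pq obtain r where kr: "q = Suc k" "p = Suc r" "k \<le> r" by (cases p) auto
    have "ee N M = cc (Suc r) (Suc k) / fact (Suc r)"
      "ee (N - 1) (M - 1) = cc r (Suc k) / fact r"
      "ee (N - 1) (M + 1) = cc (Suc r) k / fact (Suc r)"
      using pq kr by (intro ee_eq_cc; simp)+
    moreover have "(N - M + 2) / (N + M) = (real k + 2) / (real r + 1)"
    proof -
      have "N - M + 2 = 2 * (int k + 2)" "N + M = 2 * (int r + 1)" using pq kr by simp_all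
      then show ?thesis by (simp add: field_simps)
    qed
    moreover have "defect ee N M = real k / ((real r + 1) * real r) * (cc (r - 1) k / fact (r - 1))"
    proof (cases r)
      case 0
      with pq kr show ?thesis by (simp add: defect_def)
    next
      case (Suc r')
      have "N - M = 2 * int k + 2" "N + M = 2 * int r + 2" using pq kr by simp_all
      then have "2 * (N - M - 2) = 4 * int k" "(N + M) * (N + M - 2) = 4 * ((int r + 1) * int r)"
        by (simp_all add: algebra_simps)
      then have "2 * (N - M - 2) / ((N + M) * (N + M - 2)) = real k / ((real r + 1) * real r)"
        by simp
      moreover have "ee (N - 3) (M - 1) = cc (r - 1) k / fact (r - 1)"
        using pq kr Suc by (intro ee_eq_cc) auto
      ultimately show ?thesis by (simp add: defect_def)
    qed
    ultimately show ?thesis using cc_div_fact_recurrence[OF \<open>k \<le> r\<close>] by simp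
  qed
qed

lemma defect_ee_nonneg: "0 \<le> defect ee N M"
proof (cases "ee (N - 3) (M - 1) = 0")
  case False
  then have "\<not> (M - 1 < 0 \<or> N - 3 < M - 1)" using ee_eq_0 by blast
  then have "1 \<le> M" "M + 2 \<le> N" by simp_all
  then show ?thesis by (simp add: defect_def ee_nonneg)
qed (simp add: defect_def)

lemma defect_ee_le:
  fixes N M :: int
  assumes "M < N"
  shows "defect ee N M \<le> 2 / (N - M) * ee (N - 1) (M + 1)"
proof (cases "ee (N - 3) (M - 1) = 0")
  case True
  then show ?thesis using assms by (simp add: defect_def ee_nonneg)
next
  case False
  then have "\<not> (M - 1 < 0 \<or> N - 3 < M - 1)" using ee_eq_0 by blast
  then have "1 \<le> M" "M + 2 \<le> N" by simp_all
  define s t u where "s = real_of_int (N - M)" and "t = real_of_int (N + M)"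
    and "u = real_of_int (N + M - 2)"
  have "2 \<le> s" "4 \<le> t" "2 \<le> u"
    using \<open>1 \<le> M\<close> \<open>M + 2 \<le> N\<close> unfolding s_def t_def u_def by simp_all
  have "s / u * ee (N - 3) (M - 1) \<le> ee (N - 2) M"
    using ee_step[of "N - 2" M] \<open>1 \<le> M\<close> \<open>M + 2 \<le> N\<close> unfolding s_def u_def
    by (simp add: algebra_simps)
  have "s / t * ee (N - 2) M \<le> ee (N - 1) (M + 1)"
    using ee_step[of "N - 1" "M + 1"] \<open>1 \<le> M\<close> \<open>M + 2 \<le> N\<close> unfolding s_def t_def by simp
  have "defect ee N M = 2 * (s - 2) / (t * u) * ee (N - 3) (M - 1)"
    unfolding defect_def s_def t_def u_def by simp
  also have "\<dots> \<le> 2 * s / (t * u) * ee (N - 3) (M - 1)"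
    using \<open>2 \<le> u\<close> \<open>4 \<le> t\<close> by (intro mult_right_mono divide_right_mono) (simp_all add: ee_nonneg)
  also have "\<dots> = 2 / s * (s / t * (s / u * ee (N - 3) (M - 1)))"
    using \<open>2 \<le> s\<close> by (simp add: field_simps)
  also have "\<dots> \<le> 2 / s * (s / t * ee (N - 2) M)"
    using \<open>2 \<le> s\<close> \<open>4 \<le> t\<close> \<open>s / u * ee (N - 3) (M - 1) \<le> ee (N - 2) M\<close>
    by (intro mult_left_mono) simp_all
  also have "\<dots> \<le> 2 / s * ee (N - 1) (M + 1)"
    using \<open>2 \<le> s\<close> \<open>s / t * ee (N - 2) M \<le> ee (N - 1) (M + 1)\<close>
    by (intro mult_left_mono) simp_all
  finally show ?thesis unfolding s_def .
qed

lemma dn_eq_0: "m < 0 \<or> int n < m \<Longrightarrow> dn n m = 0"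
  by (induction n arbitrary: m) auto

lemma dn_nonneg: "0 \<le> dn n m"
proof (induction n arbitrary: m)
  case (Suc n)
  have "0 \<le> real_of_int (int (Suc n) - m + 2) / real_of_int (int (Suc n) + m) * dn n (m - 1)"
    if "0 \<le> m"
  proof (cases "m - 1 \<le> int n")
    case True
    with that Suc.IH show ?thesis by simp
  next
    case False
    then show ?thesis by (simp add: dn_eq_0)
  qed
  with Suc.IH show ?case by simp
qed simp

lemma dd_eq_0: "0 \<le> N \<Longrightarrow> M < 0 \<or> N < M \<Longrightarrow> dd N M = 0"
  by (simp add: dd_def dn_eq_0)

lemma dd_nonneg: "0 \<le> dd N M"
  by (simp add: dd_def dn_nonneg)

lemma dd_recurrence:
  fixes N M :: int
  assumes "1 \<le> N" "0 \<le> M"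
  shows "dd N M = (N - M + 2) / (N + M) * dd (N - 1) (M - 1) + dd (N - 1) (M + 1)"
proof -
  have n: "nat N = Suc (nat (N - 1))" "int (Suc (nat (N - 1))) = N" using assms(1) by simp_all
  show ?thesis unfolding dd_def n(1) using assms(2) by (simp only: dn.simps n(2)) simp
qed

lemma defect_dd_nonneg:
  assumes "3 \<le> N"
  shows "0 \<le> defect dd N M"
proof (cases "dd (N - 3) (M - 1) = 0")
  case False
  with assms have "\<not> (M - 1 < 0 \<or> N - 3 < M - 1)" using dd_eq_0[of "N - 3" "M - 1"] by auto
  then have "1 \<le> M" "M + 2 \<le> N" by simp_all
  then show ?thesis by (simp add: defect_def dd_nonneg)
qed (simp add: defect_def)

lemma ee_le_dd:
  fixes N M :: int
  assumes "0 \<le> N"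
  shows "ee N M \<le> dd N M"
  using assms
proof (induction N arbitrary: M rule: int_ge_induct)
  case base
  show ?case by (simp add: ee_def dd_def)
next
  case (step N)
  show ?case
  proof (cases "0 \<le> M")
    case False
    then show ?thesis by (simp add: ee_eq_0 dd_nonneg)
  next
    case True
    let ?a = "real_of_int (N + 1 - M + 2) / real_of_int (N + 1 + M)"
    have "?a * ee N (M - 1) \<le> ?a * dd N (M - 1)"
    proof (cases "M - 1 \<le> N")
      case True
      with \<open>0 \<le> M\<close> step.IH show ?thesis by (intro mult_left_mono) simp_all
    next
      case False
      with step.hyps show ?thesis by (simp add: ee_eq_0 dd_eq_0)
    qed
    moreover have "ee (N + 1) M \<le> ?a * ee N (M - 1) + ee N (M + 1)"
      using ee_recurrence[of "N + 1" M] defect_ee_nonneg[of "N + 1" M] step.hyps True by simp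
    moreover have "dd (N + 1) M = ?a * dd N (M - 1) + dd N (M + 1)"
      using dd_recurrence[of "N + 1" M] step.hyps True by simp
    ultimately show ?thesis using step.IH[of "M + 1"] by linarith
  qed
qed

lemma ee_eq_upper_combination_minus_defects:
  fixes n m :: int
  assumes "3 \<le> n" "0 \<le> m" "m < n"
  shows "ee n m = upper_combination ee n m
    - 2 / (n - m) * defect ee (n - 1) (m + 1) - 2 / (n + m) * defect ee (n - 2) m"
  using eq_upper_combination_from_recurrence[where f = ee and \<delta> = "defect ee", OF ee_recurrence assms] by simp

lemma ee_le_upper_combination:
  fixes n m :: int
  assumes "3 \<le> n" "0 \<le> m" "m < n"
  shows "ee n m \<le> upper_combination ee n m"
proof -
  have "0 \<le> 2 / (n - m) * defect ee (n - 1) (m + 1)" "0 \<le> 2 / (n + m) * defect ee (n - 2) m"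
    using assms by (simp_all add: defect_ee_nonneg)
  then show ?thesis using ee_eq_upper_combination_minus_defects[OF assms] by linarith
qed

lemma lower_combination_le_ee:
  fixes n m :: int
  assumes "3 \<le> n" "0 \<le> m" "m < n"
  shows "lower_combination ee n m \<le> ee n m"
proof (cases "n - m \<le> 2")
  case True
  have "ee (n - 2) (m + 2) = 0" "ee (n - 3) (m + 1) = 0"
    using True by (simp_all add: ee_eq_0)
  moreover have "(n - m - 2) / (n - m) * ee (n - 1) (m + 1) = 0"
    using True assms(3) by (cases "n - m = 2") (simp_all add: ee_eq_0)
  ultimately have "lower_combination ee n m = (n - m + 2) / (n + m) * ee (n - 1) (m - 1)"
    unfolding lower_combination_def by (simp only: mult_zero_right add_0_right)
  then show ?thesis using ee_step[of n m] assms(1) by simp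
next
  case False
  define s t u where "s = real_of_int (n - m)" and "t = real_of_int (n + m)"
    and "u = real_of_int (n + m - 2)"
  have "3 \<le> s" "3 \<le> t" "1 \<le> u"
    using False assms unfolding s_def t_def u_def by simp_all
  have bound1: "defect ee (n - 1) (m + 1) \<le> 2 / (s - 2) * ee (n - 2) (m + 2)"
    using defect_ee_le[of "m + 1" "n - 1"] False unfolding s_def by (simp add: algebra_simps)
  have defect1: "2 / s * defect ee (n - 1) (m + 1) \<le> 2 / (s - 2) * (2 / s * ee (n - 2) (m + 2))"
    using mult_left_mono[OF bound1, of "2 / s"] \<open>3 \<le> s\<close> by (simp add: mult.commute)
  have bound2: "defect ee (n - 2) m \<le> 2 / (s - 2) * ee (n - 3) (m + 1)"
    using defect_ee_le[of m "n - 2"] False unfolding s_def by (simp add: algebra_simps)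
  have defect2: "2 / t * defect ee (n - 2) m \<le> 2 / (s - 2) * (2 / t * ee (n - 3) (m + 1))"
    using mult_left_mono[OF bound2, of "2 / t"] \<open>3 \<le> t\<close> by (simp add: mult.commute)
  have split: "(s - 4) / (s - 2) * (x + y) = x + y - (2 / (s - 2) * x + 2 / (s - 2) * y)" for x y
  proof -
    have "(s - 4) / (s - 2) = 1 - 2 / (s - 2)"
      using \<open>3 \<le> s\<close> by (simp add: field_simps)
    then show ?thesis by (simp only: left_diff_distrib distrib_left mult_1_left)
  qed
  have "upper_combination ee n m = (s + 2) / t * ee (n - 1) (m - 1)
      + (s - 2) / s * ee (n - 1) (m + 1) + 2 / s * ee (n - 2) (m + 2) + 2 / t * ee (n - 3) (m + 1)
      + 4 / (t * u) * ee (n - 3) (m - 1)"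
    unfolding upper_combination_def s_def t_def u_def by simp
  moreover have "lower_combination ee n m = (s + 2) / t * ee (n - 1) (m - 1)
      + (s - 2) / s * ee (n - 1) (m + 1)
      + (s - 4) / (s - 2) * (2 / s * ee (n - 2) (m + 2) + 2 / t * ee (n - 3) (m + 1))"
    unfolding lower_combination_def s_def t_def by simp
  moreover have "ee n m = upper_combination ee n m
      - 2 / s * defect ee (n - 1) (m + 1) - 2 / t * defect ee (n - 2) m"
    using ee_eq_upper_combination_minus_defects[OF assms] unfolding s_def t_def .
  moreover have "0 \<le> 4 / (t * u) * ee (n - 3) (m - 1)"
    using \<open>3 \<le> t\<close> \<open>1 \<le> u\<close> by (simp add: ee_nonneg)
  ultimately show ?thesis
    using defect1 defect2 split[of "2 / s * ee (n - 2) (m + 2)" "2 / t * ee (n - 3) (m + 1)"]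
    by linarith
qed

lemma upper_combination_ee_le_dd:
  fixes n m :: int
  assumes "3 \<le> n" "0 \<le> m" "m < n"
  shows "upper_combination ee n m \<le> upper_combination dd n m"
proof -
  have scaled_ee_le_dd: "c * ee N M \<le> c * dd N M" if "0 \<le> c" "0 \<le> N" for c :: real and N M
    using that ee_le_dd by (simp add: mult_left_mono)
  have "(n - m - 2) / (n - m) * ee (n - 1) (m + 1) \<le> (n - m - 2) / (n - m) * dd (n - 1) (m + 1)"
  proof (cases "n - m = 1")
    case True
    then show ?thesis using assms by (simp add: ee_eq_0 dd_eq_0)
  next
    case False
    then show ?thesis using assms by (intro scaled_ee_le_dd) simp_all
  qed
  moreover have "(n - m + 2) / (n + m) * ee (n - 1) (m - 1) \<le> (n - m + 2) / (n + m) * dd (n - 1) (m - 1)"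
    "2 / (n - m) * ee (n - 2) (m + 2) \<le> 2 / (n - m) * dd (n - 2) (m + 2)"
    "2 / (n + m) * ee (n - 3) (m + 1) \<le> 2 / (n + m) * dd (n - 3) (m + 1)"
    "4 / ((n + m) * (n + m - 2)) * ee (n - 3) (m - 1) \<le> 4 / ((n + m) * (n + m - 2)) * dd (n - 3) (m - 1)"
    using assms by (intro scaled_ee_le_dd; simp)+
  ultimately show ?thesis unfolding upper_combination_def by linarith
qed

lemma upper_combination_dd_le:
  fixes n m :: int
  assumes "3 \<le> n" "0 \<le> m" "m < n"
  shows "upper_combination dd n m \<le> dd n m"
  using eq_upper_combination_from_recurrence[where f = dd and \<delta> = "\<lambda>_ _. 0", OF _ assms] dd_recurrence
    defect_dd_nonneg[OF assms(1)] by simp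

theorem lemma5p1:
  fixes n m :: int
  assumes "3 \<le> n" and "0 \<le> m" and "m < n"
  shows "(n - m + 2) / (n + m) * ee (n - 1) (m - 1) + (n - m - 2) / (n - m) * ee (n - 1) (m + 1)
           + (n - m - 4) / (n - m - 2) * (2 / (n - m) * ee (n - 2) (m + 2) + 2 / (n + m) * ee (n - 3) (m + 1))
         \<le> ee n m
       \<and> ee n m \<le>
           (n - m + 2) / (n + m) * ee (n - 1) (m - 1) + (n - m - 2) / (n - m) * ee (n - 1) (m + 1)
           + 2 / (n - m) * ee (n - 2) (m + 2) + 2 / (n + m) * ee (n - 3) (m + 1)
           + 4 / ((n + m) * (n + m - 2)) * ee (n - 3) (m - 1)
       \<and> (n - m + 2) / (n + m) * ee (n - 1) (m - 1) + (n - m - 2) / (n - m) * ee (n - 1) (m + 1)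
           + 2 / (n - m) * ee (n - 2) (m + 2) + 2 / (n + m) * ee (n - 3) (m + 1)
           + 4 / ((n + m) * (n + m - 2)) * ee (n - 3) (m - 1)
         \<le> (n - m + 2) / (n + m) * dd (n - 1) (m - 1) + (n - m - 2) / (n - m) * dd (n - 1) (m + 1)
           + 2 / (n - m) * dd (n - 2) (m + 2) + 2 / (n + m) * dd (n - 3) (m + 1)
           + 4 / ((n + m) * (n + m - 2)) * dd (n - 3) (m - 1)
       \<and> (n - m + 2) / (n + m) * dd (n - 1) (m - 1) + (n - m - 2) / (n - m) * dd (n - 1) (m + 1)
           + 2 / (n - m) * dd (n - 2) (m + 2) + 2 / (n + m) * dd (n - 3) (m + 1)
           + 4 / ((n + m) * (n + m - 2)) * dd (n - 3) (m - 1)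
         \<le> dd n m"
  using lower_combination_le_ee[OF assms] ee_le_upper_combination[OF assms]
    upper_combination_ee_le_dd[OF assms] upper_combination_dd_le[OF assms]
  unfolding lower_combination_def upper_combination_def by blast

end
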